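(* Let $G$ be a group with a RAAG-like action (in the sense defined below) on a CAT(0) cube complex $X$. Then every element $h\in G$ that acts non-trivially on $X$ is hyperbolic, i.e. fixes no vertex of $X$.
   Context: Let $X$ be a CAT(0) cube complex with set of halfspaces $\mathcal{H}(X)$; for $\Phi\in\mathcal{H}(X)$, $\overline{\Phi}$ denotes the complementary halfspace. Two halfspaces $\Phi,\Psi$ are nested if one of $\Phi\subseteq\Psi$, $\overline{\Phi}\subseteq\Psi$, $\Phi\subseteq\overline{\Psi}$, $\overline{\Phi}\subseteq\overline{\Psi}$ holds, and transverse otherwise. We write $\Phi\subsetneq\Psi$ tightly (or say $\Phi,\Psi$ are tightly nested) if $\Phi\subsetneq\Psi$ and there is no halfspace $\Phi'$ with $\Phi\subsetneq\Phi'\subsetneq\Psi$; more generally two distinct nested halfspaces are tightly nested if the corresponding strict inclusion among $\Phi,\overline\Phi,\Psi,\overline\Psi$ admits no intermediate halfspace. An action of a group $G$ by cubical automorphisms on $X$ is RAAG-like if: (i) there are no $\Phi\in\mathcal{H}(X)$, $h\in G$ with $h\overline{\Phi}=\Phi$; (ii) there are no $\Phi\in\mathcal{H}(X)$, $h\in G$ with $\Phi$ and $h\Phi$ transverse; (iii) there are no tightly nested $\Phi,\Phi'\in\mathcal{H}(X)$ and $h\in G$ with $\Phi$ and $h\Phi'$ transverse; (iv) there are no $\Phi\in\mathcal{H}(X)$, $h\in G$ with $\Phi\subsetneq h\overline{\Phi}$ tightly. *)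

theory Defs
  imports "HOL-Algebra.Group_Action"
begin

text \<open>A CAT(0) cube complex is represented by its 1-skeleton, which is a median graph
  (Chepoi / Roller / Gerasimov): vertex set V, symmetric irreflexive edge relation E on V.\<close>

definition is_walk :: "'v set \<Rightarrow> ('v \<Rightarrow> 'v \<Rightarrow> bool) \<Rightarrow> 'v list \<Rightarrow> bool" where
  "is_walk V E p \<longleftrightarrow> p \<noteq> [] \<and> set p \<subseteq> V \<and> (\<forall>i. Suc i < length p \<longrightarrow> E (p ! i) (p ! Suc i))"

definition gdist :: "'v set \<Rightarrow> ('v \<Rightarrow> 'v \<Rightarrow> bool) \<Rightarrow> 'v \<Rightarrow> 'v \<Rightarrow> nat" where
  "gdist V E u v = (LEAST n. \<exists>p. is_walk V E p \<and> hd p = u \<and> last p = v \<and> length p = Suc n)"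

definition graph_connected :: "'v set \<Rightarrow> ('v \<Rightarrow> 'v \<Rightarrow> bool) \<Rightarrow> bool" where
  "graph_connected V E \<longleftrightarrow> (\<forall>u\<in>V. \<forall>v\<in>V. \<exists>p. is_walk V E p \<and> hd p = u \<and> last p = v)"

definition between :: "'v set \<Rightarrow> ('v \<Rightarrow> 'v \<Rightarrow> bool) \<Rightarrow> 'v \<Rightarrow> 'v \<Rightarrow> 'v \<Rightarrow> bool" where
  "between V E x m y \<longleftrightarrow> gdist V E x m + gdist V E m y = gdist V E x y"

definition median_graph :: "'v set \<Rightarrow> ('v \<Rightarrow> 'v \<Rightarrow> bool) \<Rightarrow> bool" where
  "median_graph V E \<longleftrightarrow>
     (\<forall>u v. E u v \<longrightarrow> u \<in> V \<and> v \<in> V) \<and>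
     (\<forall>u v. E u v \<longrightarrow> E v u) \<and>
     (\<forall>u. \<not> E u u) \<and>
     graph_connected V E \<and>
     (\<forall>x\<in>V. \<forall>y\<in>V. \<forall>z\<in>V. \<exists>!m. m \<in> V \<and> between V E x m y \<and> between V E y m z \<and> between V E x m z)"

text \<open>Halfspaces: for an edge uv, the side of the hyperplane dual to uv containing u.\<close>
definition halfspace_of_edge :: "'v set \<Rightarrow> ('v \<Rightarrow> 'v \<Rightarrow> bool) \<Rightarrow> 'v \<Rightarrow> 'v \<Rightarrow> 'v set" where
  "halfspace_of_edge V E u v = {w \<in> V. gdist V E w u < gdist V E w v}"

definition halfspaces :: "'v set \<Rightarrow> ('v \<Rightarrow> 'v \<Rightarrow> bool) \<Rightarrow> 'v set set" where
  "halfspaces V E = {halfspace_of_edge V E u v | u v. E u v}"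

definition hcompl :: "'v set \<Rightarrow> 'v set \<Rightarrow> 'v set" where
  "hcompl V A = V - A"

definition nested :: "'v set \<Rightarrow> 'v set \<Rightarrow> 'v set \<Rightarrow> bool" where
  "nested V A B \<longleftrightarrow> A \<subseteq> B \<or> hcompl V A \<subseteq> B \<or> A \<subseteq> hcompl V B \<or> hcompl V A \<subseteq> hcompl V B"

definition transverse :: "'v set \<Rightarrow> 'v set \<Rightarrow> 'v set \<Rightarrow> bool" where
  "transverse V A B \<longleftrightarrow> \<not> nested V A B"

definition tight_incl :: "'v set \<Rightarrow> ('v \<Rightarrow> 'v \<Rightarrow> bool) \<Rightarrow> 'v set \<Rightarrow> 'v set \<Rightarrow> bool" where
  "tight_incl V E A B \<longleftrightarrow> A \<subset> B \<and> \<not> (\<exists>C \<in> halfspaces V E. A \<subset> C \<and> C \<subset> B)"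

definition tightly_nested :: "'v set \<Rightarrow> ('v \<Rightarrow> 'v \<Rightarrow> bool) \<Rightarrow> 'v set \<Rightarrow> 'v set \<Rightarrow> bool" where
  "tightly_nested V E A B \<longleftrightarrow> A \<noteq> B \<and> nested V A B \<and>
     (\<exists>A' \<in> {A, hcompl V A}. \<exists>B' \<in> {B, hcompl V B}. tight_incl V E A' B')"

definition cubical_action :: "('g, 'b) monoid_scheme \<Rightarrow> 'v set \<Rightarrow> ('v \<Rightarrow> 'v \<Rightarrow> bool) \<Rightarrow> ('g \<Rightarrow> 'v \<Rightarrow> 'v) \<Rightarrow> bool" where
  "cubical_action G V E act \<longleftrightarrow> group_action G V act \<and>
     (\<forall>h \<in> carrier G. \<forall>u\<in>V. \<forall>v\<in>V. E u v \<longleftrightarrow> E (act h u) (act h v))"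

definition raag_like :: "('g, 'b) monoid_scheme \<Rightarrow> 'v set \<Rightarrow> ('v \<Rightarrow> 'v \<Rightarrow> bool) \<Rightarrow> ('g \<Rightarrow> 'v \<Rightarrow> 'v) \<Rightarrow> bool" where
  "raag_like G V E act \<longleftrightarrow>
     cubical_action G V E act \<and>
     \<not> (\<exists>P \<in> halfspaces V E. \<exists>h \<in> carrier G. act h ` (hcompl V P) = P) \<and>
     \<not> (\<exists>P \<in> halfspaces V E. \<exists>h \<in> carrier G. transverse V P (act h ` P)) \<and>
     \<not> (\<exists>P \<in> halfspaces V E. \<exists>P' \<in> halfspaces V E. \<exists>h \<in> carrier G.
           tightly_nested V E P P' \<and> transverse V P (act h ` P')) \<and>
     \<not> (\<exists>P \<in> halfspaces V E. \<exists>h \<in> carrier G. tight_incl V E P (act h ` (hcompl V P)))"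

end

theory Submission
  imports Defs
begin

text \<open>Suppose h fixes a vertex but not all of them. Walking from a fixed vertex to a moved one
  produces an edge uw with h u = u and h w \<noteq> w, so uw and u(hw) are two distinct edges at u.
  In a median graph the halfspaces A, B of such edges pointing away from u are either
  transverse, or satisfy A \<subset> V - B tightly, since a halfspace strictly between them would
  separate the endpoints of one of the two edges and hence coincide with its halfspace.
  As B = hA, the first alternative violates condition (ii) of a RAAG-like action and the second
  one violates condition (iv).\<close>

lemma is_walk_singleton [simp]: "is_walk V E [x] \<longleftrightarrow> x \<in> V"
  by (simp add: is_walk_def)

lemma is_walk_Cons_Cons [simp]:
  "is_walk V E (x # y # p) \<longleftrightarrow> x \<in> V \<and> E x y \<and> is_walk V E (y # p)"
proof
  assume walk: "is_walk V E (x # y # p)"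
  have "E ((y # p) ! i) ((y # p) ! Suc i)" if "Suc i < length (y # p)" for i
  proof -
    have "Suc (Suc i) < length (x # y # p)"
      using that by simp
    then show ?thesis
      using walk unfolding is_walk_def by fastforce
  qed
  then show "x \<in> V \<and> E x y \<and> is_walk V E (y # p)"
    using walk unfolding is_walk_def by force
next
  assume "x \<in> V \<and> E x y \<and> is_walk V E (y # p)"
  then show "is_walk V E (x # y # p)"
    unfolding is_walk_def by (auto simp: less_Suc_eq_0_disj)
qed

lemma is_walk_append:
  "is_walk V E p \<Longrightarrow> is_walk V E q \<Longrightarrow> last p = hd q \<Longrightarrow> is_walk V E (p @ tl q)"
proof (induction p rule: induct_list012)
  case 1
  then show ?case by (simp add: is_walk_def)
next
  case (2 x)
  then show ?case by (cases q) auto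
next
  case (3 x y r)
  then show ?case by auto
qed

lemma is_walk_rev:
  assumes "\<And>u v. E u v \<Longrightarrow> E v u"
  shows "is_walk V E p \<Longrightarrow> is_walk V E (rev p)"
proof (induction p rule: induct_list012)
  case 1
  then show ?case by (simp add: is_walk_def)
next
  case (2 x)
  then show ?case by simp
next
  case (3 x y r)
  then have "y \<in> V"
    by (simp add: is_walk_def)
  then have "is_walk V E (rev (y # r))" "is_walk V E [y, x]"
    using 3 assms by auto
  then show ?case
    using is_walk_append[of V E "rev (y # r)" "[y, x]"] by simp
qed

lemma is_walk_map:
  assumes "\<And>v. v \<in> V \<Longrightarrow> f v \<in> V" and "\<And>u v. E u v \<Longrightarrow> E (f u) (f v)"
  shows "is_walk V E p \<Longrightarrow> is_walk V E (map f p)"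
  by (induction p rule: induct_list012) (auto simp: assms)

lemma is_walk_fixed_to_moved:
  "is_walk V E p \<Longrightarrow> f (hd p) = hd p \<Longrightarrow> f (last p) \<noteq> last p
    \<Longrightarrow> \<exists>u w. E u w \<and> f u = u \<and> f w \<noteq> w"
proof (induction p rule: induct_list012)
  case (3 x y r)
  then show ?case by (cases "f y = y") auto
qed (simp_all add: is_walk_def)

definition graph_automorphism :: "'v set \<Rightarrow> ('v \<Rightarrow> 'v \<Rightarrow> bool) \<Rightarrow> ('v \<Rightarrow> 'v) \<Rightarrow> bool" where
  "graph_automorphism V E f \<longleftrightarrow> bij_betw f V V \<and> (\<forall>u\<in>V. \<forall>v\<in>V. E (f u) (f v) \<longleftrightarrow> E u v)"

lemma graph_automorphism_inv_into:
  assumes "graph_automorphism V E f"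
  shows "graph_automorphism V E (inv_into V f)"
proof -
  have bij: "bij_betw f V V" and edges: "\<forall>u\<in>V. \<forall>v\<in>V. E (f u) (f v) \<longleftrightarrow> E u v"
    using assms by (auto simp: graph_automorphism_def)
  have "E (inv_into V f u) (inv_into V f v) \<longleftrightarrow> E u v" if "u \<in> V" "v \<in> V" for u v
  proof -
    have "inv_into V f u \<in> V" "inv_into V f v \<in> V"
      using that bij_betw_apply[OF bij_betw_inv_into[OF bij]] by blast+
    moreover have "f (inv_into V f u) = u" "f (inv_into V f v) = v"
      using that bij by (simp_all add: bij_betw_def f_inv_into_f)
    ultimately show ?thesis
      using edges by metis
  qed
  then show ?thesis
    using bij_betw_inv_into[OF bij] by (simp add: graph_automorphism_def)
qed

lemma image_hcompl:
  assumes "bij_betw f V V" and "A \<subseteq> V"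
  shows "f ` hcompl V A = hcompl V (f ` A)"
  using assms inj_on_image_set_diff[of f V V A] by (auto simp: hcompl_def bij_betw_def)

locale connected_graph =
  fixes V :: "'v set" and E :: "'v \<Rightarrow> 'v \<Rightarrow> bool"
  assumes edge_in_V: "E u v \<Longrightarrow> u \<in> V"
    and edge_sym: "E u v \<Longrightarrow> E v u"
    and edge_irrefl: "\<not> E u u"
    and connected: "graph_connected V E"
begin

abbreviation \<delta> :: "'v \<Rightarrow> 'v \<Rightarrow> nat" where
  "\<delta> \<equiv> gdist V E"

lemma edge_in_V': "E u v \<Longrightarrow> v \<in> V"
  using edge_in_V edge_sym by blast

lemma shortest_walk_exists:
  assumes "u \<in> V" "v \<in> V"
  obtains p where "is_walk V E p" "hd p = u" "last p = v" "length p = Suc (\<delta> u v)"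
proof -
  obtain p where p: "is_walk V E p" "hd p = u" "last p = v"
    using connected assms unfolding graph_connected_def by blast
  then have "\<exists>n p. is_walk V E p \<and> hd p = u \<and> last p = v \<and> length p = Suc n"
    by (intro exI[of _ "length p - 1"] exI[of _ p]) (auto simp: is_walk_def)
  then have "\<exists>p. is_walk V E p \<and> hd p = u \<and> last p = v \<and> length p = Suc (\<delta> u v)"
    unfolding gdist_def by (rule LeastI_ex)
  then show ?thesis
    using that by blast
qed

lemma gdist_less_length:
  assumes "is_walk V E p" "hd p = u" "last p = v"
  shows "\<delta> u v < length p"
proof -
  have "p \<noteq> []"
    using assms(1) by (simp add: is_walk_def)
  then have "\<delta> u v \<le> length p - 1"
    unfolding gdist_def using assms by (intro Least_le) auto
  then show ?thesis
    using \<open>p \<noteq> []\<close> by (cases p) auto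
qed

lemma gdist_eq_0_iff:
  assumes "u \<in> V" "v \<in> V"
  shows "\<delta> u v = 0 \<longleftrightarrow> u = v"
proof
  assume "\<delta> u v = 0"
  obtain p where "is_walk V E p" "hd p = u" "last p = v" "length p = Suc (\<delta> u v)"
    by (rule shortest_walk_exists[OF assms])
  with \<open>\<delta> u v = 0\<close> show "u = v"
    by (cases p) auto
next
  assume "u = v"
  then show "\<delta> u v = 0"
    using gdist_less_length[of "[u]" u u] assms by simp
qed

lemma gdist_eq_1_iff:
  assumes "u \<in> V" "v \<in> V"
  shows "\<delta> u v = 1 \<longleftrightarrow> E u v"
proof
  assume "\<delta> u v = 1"
  obtain p where p: "is_walk V E p" "hd p = u" "last p = v" "length p = Suc (\<delta> u v)"
    by (rule shortest_walk_exists[OF assms])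
  with \<open>\<delta> u v = 1\<close> obtain a b where "p = [a, b]"
    by (cases p; cases "tl p") auto
  then show "E u v"
    using p by simp
next
  assume uv: "E u v"
  then have "\<delta> u v < 2"
    using gdist_less_length[of "[u, v]" u v] edge_in_V edge_in_V' by simp
  moreover have "u \<noteq> v"
    using uv edge_irrefl by blast
  ultimately show "\<delta> u v = 1"
    using gdist_eq_0_iff[OF assms] by simp
qed

lemma gdist_triangle:
  assumes "u \<in> V" "v \<in> V" "w \<in> V"
  shows "\<delta> u w \<le> \<delta> u v + \<delta> v w"
proof -
  obtain p where p: "is_walk V E p" "hd p = u" "last p = v" "length p = Suc (\<delta> u v)"
    by (rule shortest_walk_exists[OF assms(1,2)])
  obtain q where q: "is_walk V E q" "hd q = v" "last q = w" "length q = Suc (\<delta> v w)"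
    by (rule shortest_walk_exists[OF assms(2,3)])
  have "p \<noteq> []" "q \<noteq> []"
    using p q by (auto simp: is_walk_def)
  then have "hd (p @ tl q) = u" "last (p @ tl q) = w"
    using p q by (auto simp: last_append last_tl) (cases q; simp)
  moreover have "is_walk V E (p @ tl q)"
    using is_walk_append[OF p(1) q(1)] p(3) q(2) by simp
  ultimately have "\<delta> u w < length (p @ tl q)"
    using gdist_less_length by blast
  then show ?thesis
    using p q by simp
qed

lemma gdist_sym:
  assumes "u \<in> V" "v \<in> V"
  shows "\<delta> u v = \<delta> v u"
proof -
  have "\<delta> b a \<le> \<delta> a b" if ab: "a \<in> V" "b \<in> V" for a b
  proof -
    obtain p where p: "is_walk V E p" "hd p = a" "last p = b" "length p = Suc (\<delta> a b)"
      by (rule shortest_walk_exists[OF ab])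
    then have "p \<noteq> []"
      by (auto simp: is_walk_def)
    then have "\<delta> b a < length (rev p)"
      using p is_walk_rev[OF edge_sym] by (intro gdist_less_length) (auto simp: hd_rev last_rev)
    then show ?thesis
      using p by simp
  qed
  then show ?thesis
    using assms by (simp add: le_antisym)
qed

lemma gdist_Suc_neighbour:
  assumes "u \<in> V" "v \<in> V" "\<delta> u v = Suc n"
  obtains u' where "E u u'" "\<delta> u' v = n"
proof -
  obtain p where p: "is_walk V E p" "hd p = u" "last p = v" "length p = Suc (\<delta> u v)"
    by (rule shortest_walk_exists[OF assms(1,2)])
  with assms(3) obtain b r where pr: "p = u # b # r"
    by (cases p; cases "tl p") auto
  then have ub: "E u b" and "is_walk V E (b # r)"
    using p by auto
  then have "\<delta> b v \<le> n"
    using gdist_less_length[of "b # r" b v] p pr assms(3) by simp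
  moreover have "\<delta> u v \<le> 1 + \<delta> b v"
    using gdist_triangle[of u b v] gdist_eq_1_iff[of u b] ub assms edge_in_V' by simp
  ultimately show ?thesis
    using that ub assms by simp
qed

lemma edge_fixed_moved:
  assumes "v \<in> V" "f v = v" "x \<in> V" "f x \<noteq> x"
  obtains u w where "E u w" "f u = u" "f w \<noteq> w"
proof -
  obtain p where "is_walk V E p" "hd p = v" "last p = x"
    using connected assms unfolding graph_connected_def by blast
  then show ?thesis
    using is_walk_fixed_to_moved[of V E p f] assms that by auto
qed

lemma gdist_automorphism_le:
  assumes "graph_automorphism V E f" "u \<in> V" "v \<in> V"
  shows "\<delta> (f u) (f v) \<le> \<delta> u v"
proof -
  have f: "\<And>v. v \<in> V \<Longrightarrow> f v \<in> V" "\<And>u v. E u v \<Longrightarrow> E (f u) (f v)"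
    using assms(1) edge_in_V edge_in_V'
    by (auto simp: graph_automorphism_def bij_betw_apply)
  obtain p where p: "is_walk V E p" "hd p = u" "last p = v" "length p = Suc (\<delta> u v)"
    by (rule shortest_walk_exists[OF assms(2,3)])
  then have "p \<noteq> []"
    by (auto simp: is_walk_def)
  then have "\<delta> (f u) (f v) < length (map f p)"
    using p is_walk_map[of V f E, OF f] by (intro gdist_less_length) (auto simp: hd_map last_map)
  then show ?thesis
    using p by simp
qed

lemma gdist_automorphism:
  assumes "graph_automorphism V E f" "u \<in> V" "v \<in> V"
  shows "\<delta> (f u) (f v) = \<delta> u v"
proof -
  have bij: "bij_betw f V V"
    using assms(1) by (simp add: graph_automorphism_def)
  have "\<delta> u v = \<delta> (inv_into V f (f u)) (inv_into V f (f v))"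
    using assms bij by (simp add: bij_betw_imp_inj_on)
  also have "\<dots> \<le> \<delta> (f u) (f v)"
    using gdist_automorphism_le[OF graph_automorphism_inv_into[OF assms(1)]] assms bij
    by (simp add: bij_betw_apply)
  finally show ?thesis
    using gdist_automorphism_le[OF assms] by simp
qed

lemma halfspace_automorphism:
  assumes "graph_automorphism V E f" "E a b"
  shows "f ` halfspace_of_edge V E a b = halfspace_of_edge V E (f a) (f b)"
proof -
  have bij: "bij_betw f V V"
    using assms(1) by (simp add: graph_automorphism_def)
  have ab: "a \<in> V" "b \<in> V"
    using assms(2) edge_in_V edge_in_V' by auto
  have "f ` {w \<in> V. \<delta> w a < \<delta> w b} = {z \<in> f ` V. \<delta> z (f a) < \<delta> z (f b)}"
    using gdist_automorphism[OF assms(1)] ab by auto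
  then show ?thesis
    using bij by (simp add: halfspace_of_edge_def bij_betw_def)
qed

lemma neighbour_mem_halfspace_iff:
  assumes "E u w" "E u w'"
  shows "w \<in> halfspace_of_edge V E w' u \<longleftrightarrow> w = w'"
proof -
  have V: "u \<in> V" "w \<in> V" "w' \<in> V"
    using assms edge_in_V edge_in_V' by auto
  have "\<delta> w u = 1"
    using assms V gdist_eq_1_iff edge_sym by blast
  then show ?thesis
    using V gdist_eq_0_iff by (auto simp: halfspace_of_edge_def)
qed

lemma not_mem_halfspace_of_edge:
  assumes "E a b"
  shows "b \<notin> halfspace_of_edge V E a b"
proof -
  have "b \<in> V"
    using assms by (rule edge_in_V')
  then have "\<delta> b b = 0"
    using gdist_eq_0_iff by simp
  then show ?thesis
    by (simp add: halfspace_of_edge_def)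
qed

end

locale median = connected_graph +
  assumes ex1_median: "\<lbrakk>x \<in> V; y \<in> V; z \<in> V\<rbrakk>
    \<Longrightarrow> \<exists>!m. m \<in> V \<and> between V E x m y \<and> between V E y m z \<and> between V E x m z"

lemma median_graph_imp_median: "median_graph V E \<Longrightarrow> median V E"
  unfolding median_graph_def median_def median_axioms_def connected_graph_def by blast

context median
begin

lemma gdist_edge_ends_neq:
  assumes "E a b" "z \<in> V"
  shows "\<delta> z a \<noteq> \<delta> z b"
proof -
  have ab: "a \<in> V" "b \<in> V"
    using assms(1) edge_in_V edge_in_V' by auto
  obtain m where m: "m \<in> V" "between V E z m a" "between V E a m b" "between V E z m b"
    using ex1_median[OF assms(2) ab] by blast
  have "\<delta> a b = 1" "\<delta> b a = 1"
    using assms(1) ab gdist_eq_1_iff edge_sym by auto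
  then have "\<delta> a m = 0 \<or> \<delta> m b = 0"
    using m(3) unfolding between_def by arith
  then have "m = a \<or> m = b"
    using gdist_eq_0_iff ab m(1) by auto
  then show ?thesis
    using m(2,4) \<open>\<delta> a b = 1\<close> \<open>\<delta> b a = 1\<close> ab gdist_eq_0_iff by (auto simp: between_def)
qed

lemma gdist_edge_ends:
  assumes "E a b" "z \<in> V"
  shows "\<delta> z b = Suc (\<delta> z a) \<or> \<delta> z a = Suc (\<delta> z b)"
proof -
  have ab: "a \<in> V" "b \<in> V" "\<delta> a b = 1" "\<delta> b a = 1"
    using assms(1) edge_in_V edge_in_V' gdist_eq_1_iff edge_sym by auto
  then have "\<delta> z b \<le> \<delta> z a + 1" "\<delta> z a \<le> \<delta> z b + 1"
    using gdist_triangle assms(2) by metis+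
  then show ?thesis
    using gdist_edge_ends_neq[OF assms] by linarith
qed

lemma gdist_edge_ends':
  assumes "E a b" "z \<in> V"
  shows "\<delta> b z = Suc (\<delta> a z) \<or> \<delta> a z = Suc (\<delta> b z)"
  using gdist_edge_ends[OF assms] gdist_sym assms edge_in_V edge_in_V' by metis

lemma gdist_common_neighbours:
  assumes "E p a" "E p b" "a \<noteq> b"
  shows "\<delta> a b = 2"
proof -
  have V: "p \<in> V" "a \<in> V" "b \<in> V"
    using assms edge_in_V edge_in_V' by auto
  have "\<delta> p a = 1" "\<delta> p b = 1" "\<delta> a p = 1"
    using assms V gdist_eq_1_iff edge_sym by auto
  then have "\<delta> a b \<le> 2"
    using gdist_triangle[of a p b] V by simp
  moreover have "\<delta> a b \<noteq> 0"
    using gdist_eq_0_iff V assms(3) by simp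
  moreover have "\<not> E a b"
    using gdist_edge_ends_neq[of a b p] V \<open>\<delta> p a = 1\<close> \<open>\<delta> p b = 1\<close> by auto
  then have "\<delta> a b \<noteq> 1"
    using gdist_eq_1_iff V by simp
  ultimately show ?thesis
    by linarith
qed

text \<open>Two distinct vertices with three common neighbours would both be medians of them.\<close>

lemma no_K23:
  assumes "p \<noteq> q" "c\<^sub>1 \<noteq> c\<^sub>2" "c\<^sub>1 \<noteq> c\<^sub>3" "c\<^sub>2 \<noteq> c\<^sub>3"
    and "E p c\<^sub>1" "E p c\<^sub>2" "E p c\<^sub>3" "E q c\<^sub>1" "E q c\<^sub>2" "E q c\<^sub>3"
  shows False
proof -
  have V: "p \<in> V" "q \<in> V" "c\<^sub>1 \<in> V" "c\<^sub>2 \<in> V" "c\<^sub>3 \<in> V"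
    using assms edge_in_V edge_in_V' by auto
  have "between V E c\<^sub>i r c\<^sub>j"
    if "r \<in> {p, q}" "E r c\<^sub>i" "E r c\<^sub>j" "c\<^sub>i \<noteq> c\<^sub>j" for r c\<^sub>i c\<^sub>j
  proof -
    have "r \<in> V" "c\<^sub>i \<in> V" "c\<^sub>j \<in> V"
      using that edge_in_V edge_in_V' by auto
    then have "\<delta> c\<^sub>i r = 1" "\<delta> r c\<^sub>j = 1"
      using that gdist_eq_1_iff edge_sym by auto
    moreover have "\<delta> c\<^sub>i c\<^sub>j = 2"
      using that gdist_common_neighbours by blast
    ultimately show ?thesis
      by (simp add: between_def)
  qed
  then have "between V E c\<^sub>1 r c\<^sub>2 \<and> between V E c\<^sub>2 r c\<^sub>3 \<and> between V E c\<^sub>1 r c\<^sub>3" if "r \<in> {p, q}" for r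
    using that assms by blast
  then show False
    using ex1_median[OF V(3-5)] V(1,2) assms(1) by blast
qed

lemma quadrangle:
  assumes "u \<in> V" "E x v" "E x w" "v \<noteq> w"
    and "Suc (\<delta> u v) = \<delta> u x" "Suc (\<delta> u w) = \<delta> u x"
  obtains t where "E v t" "E w t" "Suc (Suc (\<delta> u t)) = \<delta> u x"
proof -
  have V: "v \<in> V" "w \<in> V"
    using assms edge_in_V' by auto
  obtain m where m: "m \<in> V" "between V E u m v" "between V E v m w" "between V E u m w"
    using ex1_median[OF assms(1) V] by blast
  have vw: "\<delta> v w = 2"
    using gdist_common_neighbours assms by blast
  have "m \<noteq> v" "m \<noteq> w"
    using m(2-4) vw assms(5,6) V gdist_eq_0_iff gdist_sym by (auto simp: between_def)
  then have "\<delta> v m \<noteq> 0" "\<delta> m w \<noteq> 0"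
    using m(1) V gdist_eq_0_iff by auto
  then have "\<delta> v m = 1" "\<delta> m w = 1"
    using m(3) vw unfolding between_def by arith+
  then have "E v m" "E w m"
    using m(1) V gdist_eq_1_iff edge_sym by auto
  moreover have "Suc (Suc (\<delta> u m)) = \<delta> u x"
    using m(2) \<open>\<delta> v m = 1\<close> assms(5) gdist_sym m(1) V by (simp add: between_def)
  ultimately show ?thesis
    using that by blast
qed

text \<open>If z were closer to y than to x, the quadrangle condition at y1 would give a vertex t
  such that x1 and y have the three common neighbours x, y1, t.\<close>

lemma gdist_square_opposite_edges:
  assumes square: "E x y" "E x x\<^sub>1" "E x\<^sub>1 y\<^sub>1" "E y y\<^sub>1" "x \<noteq> y\<^sub>1" "x\<^sub>1 \<noteq> y"
    and z: "z \<in> V" "\<delta> z x\<^sub>1 < \<delta> z y\<^sub>1"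
  shows "\<delta> z x < \<delta> z y"
proof (rule ccontr)
  assume "\<not> \<delta> z x < \<delta> z y"
  then have zx: "\<delta> z x = Suc (\<delta> z y)"
    using gdist_edge_ends[OF square(1) z(1)] by linarith
  have zy\<^sub>1: "\<delta> z y\<^sub>1 = Suc (\<delta> z x\<^sub>1)"
    using gdist_edge_ends[OF square(3) z(1)] z(2) by linarith
  have zx\<^sub>1: "\<delta> z x\<^sub>1 = \<delta> z y"
    using gdist_edge_ends[OF square(2) z(1)] gdist_edge_ends[OF square(4) z(1)] zx zy\<^sub>1 by linarith
  obtain t where t: "E x\<^sub>1 t" "E y t" "Suc (Suc (\<delta> z t)) = \<delta> z y\<^sub>1"
    using quadrangle[OF z(1) edge_sym[OF square(3)] edge_sym[OF square(4)] square(6)] zy\<^sub>1 zx\<^sub>1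
    by metis
  have "x \<noteq> t" "y\<^sub>1 \<noteq> t"
    using t(3) zx zy\<^sub>1 zx\<^sub>1 by auto
  then show False
    using no_K23[OF square(6,5)] edge_sym[OF square(2)] edge_sym[OF square(1)] square(3,4) t(1,2)
    by blast
qed

text \<open>Induction on \<delta> x a: the quadrangle condition moves the edge xy one step towards a, to the
  opposite edge x1y1 of a square, which crosses the same hyperplane.\<close>

lemma gdist_crossing_edge:
  assumes "E a b" "E x y" "\<delta> x a < \<delta> x b" "\<delta> y b < \<delta> y a"
    and z: "z \<in> V" "\<delta> z a < \<delta> z b"
  shows "\<delta> z x < \<delta> z y"
  using assms(1-4)
proof (induction "\<delta> x a" arbitrary: x y)
  case 0
  then have V: "a \<in> V" "b \<in> V" "x \<in> V" "y \<in> V"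
    using edge_in_V edge_in_V' by auto
  then have "x = a"
    using 0 gdist_eq_0_iff by metis
  then have "\<delta> y a = 1"
    using 0 V gdist_eq_1_iff edge_sym by auto
  then have "y = b"
    using 0 V gdist_eq_0_iff by auto
  then show ?case
    using \<open>x = a\<close> z by simp
next
  case (Suc n)
  then have V: "a \<in> V" "b \<in> V" "x \<in> V" "y \<in> V"
    using edge_in_V edge_in_V' by auto
  obtain x\<^sub>1 where x\<^sub>1: "E x x\<^sub>1" "\<delta> x\<^sub>1 a = n"
    using gdist_Suc_neighbour[OF V(3,1) Suc.hyps(2)[symmetric]] by blast
  have x\<^sub>1V: "x\<^sub>1 \<in> V"
    using x\<^sub>1(1) edge_in_V' by blast
  have xb: "\<delta> x b = Suc (Suc n)"
    using gdist_edge_ends[OF Suc.prems(1) V(3)] Suc.hyps(2) Suc.prems(3) by linarith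
  have ya: "\<delta> y a = Suc (Suc n)" and yb: "\<delta> y b = Suc n"
    using gdist_edge_ends'[OF Suc.prems(2) V(1)] gdist_edge_ends'[OF Suc.prems(2) V(2)]
      gdist_edge_ends[OF Suc.prems(1) V(4)] Suc.hyps(2) Suc.prems(4) xb by linarith+
  have x\<^sub>1b: "\<delta> x\<^sub>1 b = Suc n"
    using gdist_edge_ends'[OF x\<^sub>1(1) V(2)] gdist_edge_ends[OF Suc.prems(1) x\<^sub>1V] x\<^sub>1(2) xb
    by linarith
  have "x\<^sub>1 \<noteq> y"
    using x\<^sub>1(2) ya by auto
  obtain y\<^sub>1 where y\<^sub>1: "E x\<^sub>1 y\<^sub>1" "E y y\<^sub>1" "Suc (Suc (\<delta> b y\<^sub>1)) = \<delta> b x"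
    using quadrangle[OF V(2) x\<^sub>1(1) Suc.prems(2) \<open>x\<^sub>1 \<noteq> y\<close>] x\<^sub>1b yb xb gdist_sym V x\<^sub>1V
    by metis
  have y\<^sub>1V: "y\<^sub>1 \<in> V"
    using y\<^sub>1(1) edge_in_V' by blast
  have y\<^sub>1b: "\<delta> y\<^sub>1 b = n"
    using y\<^sub>1(3) xb gdist_sym V y\<^sub>1V by simp
  have y\<^sub>1a: "\<delta> y\<^sub>1 a = Suc n"
    using gdist_edge_ends'[OF y\<^sub>1(2) V(1)] gdist_edge_ends[OF Suc.prems(1) y\<^sub>1V] ya y\<^sub>1b
    by linarith
  have "\<delta> z x\<^sub>1 < \<delta> z y\<^sub>1"
    using Suc.hyps(1)[of x\<^sub>1 y\<^sub>1] Suc.prems(1) y\<^sub>1(1) x\<^sub>1 x\<^sub>1b y\<^sub>1a y\<^sub>1b by simp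
  moreover have "x \<noteq> y\<^sub>1"
    using xb y\<^sub>1b by auto
  ultimately show ?case
    using gdist_square_opposite_edges[OF Suc.prems(2) x\<^sub>1(1) y\<^sub>1(1,2) _ \<open>x\<^sub>1 \<noteq> y\<close> z(1)] by blast
qed

lemma halfspace_eq_of_crossing_edge:
  assumes "E a b" "E x y" "x \<in> halfspace_of_edge V E a b" "y \<notin> halfspace_of_edge V E a b"
  shows "halfspace_of_edge V E a b = halfspace_of_edge V E x y"
proof -
  have V: "x \<in> V" "y \<in> V"
    using assms(2) edge_in_V edge_in_V' by auto
  have x: "\<delta> x a < \<delta> x b" and y: "\<delta> y b < \<delta> y a"
    using assms(3,4) V gdist_edge_ends_neq[OF assms(1) V(2)]
    by (auto simp: halfspace_of_edge_def)
  have "\<delta> z a < \<delta> z b \<longleftrightarrow> \<delta> z x < \<delta> z y" if "z \<in> V" for z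
    using gdist_crossing_edge[OF assms(1,2) x y that]
      gdist_crossing_edge[OF edge_sym[OF assms(1)] edge_sym[OF assms(2)] y x that]
      gdist_edge_ends_neq[OF assms(1) that] by linarith
  then show ?thesis
    by (auto simp: halfspace_of_edge_def)
qed

lemma hcompl_halfspace_of_edge:
  assumes "E a b"
  shows "hcompl V (halfspace_of_edge V E b a) = halfspace_of_edge V E a b"
proof -
  have "\<not> \<delta> z b < \<delta> z a \<longleftrightarrow> \<delta> z a < \<delta> z b" if "z \<in> V" for z
    using gdist_edge_ends_neq[OF assms that] by linarith
  then show ?thesis
    by (auto simp: hcompl_def halfspace_of_edge_def)
qed

lemma halfspaces_at_vertex_transverse_or_tight:
  assumes "E u w" "E u w'" "w \<noteq> w'"
  defines "A \<equiv> halfspace_of_edge V E w u" and "B \<equiv> halfspace_of_edge V E w' u"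
  shows "transverse V A B \<or> tight_incl V E A (hcompl V B)"
proof -
  have V: "u \<in> V" "w \<in> V" "w' \<in> V"
    using assms(1,2) edge_in_V edge_in_V' by auto
  have mem: "w \<in> A" "w' \<notin> A" "u \<notin> A" "w' \<in> B" "w \<notin> B" "u \<notin> B"
    using neighbour_mem_halfspace_iff[OF assms(1)] neighbour_mem_halfspace_iff[OF assms(2)]
      not_mem_halfspace_of_edge edge_sym assms by (auto simp: A_def B_def)
  have AB: "A \<subseteq> V" "B \<subseteq> V"
    by (auto simp: A_def B_def halfspace_of_edge_def)
  have "A \<subset> hcompl V B" if "nested V A B"
    using that mem V AB unfolding nested_def hcompl_def by blast
  moreover have False if C: "C \<in> halfspaces V E" "A \<subset> C" "C \<subset> hcompl V B" for C
  proof -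
    obtain a b where ab: "E a b" "C = halfspace_of_edge V E a b"
      using C(1) unfolding halfspaces_def by blast
    have "w \<in> C" "w' \<notin> C"
      using C(2,3) mem by (auto simp: hcompl_def)
    show False
    proof (cases "u \<in> C")
      case True
      then have "C = halfspace_of_edge V E u w'"
        using halfspace_eq_of_crossing_edge[OF ab(1) assms(2)] ab(2) \<open>w' \<notin> C\<close> by simp
      then show False
        using C(3) hcompl_halfspace_of_edge[OF assms(2)] by (simp add: B_def)
    next
      case False
      then have "C = A"
        using halfspace_eq_of_crossing_edge[OF ab(1) edge_sym[OF assms(1)]] ab(2) \<open>w \<in> C\<close>
        by (simp add: A_def)
      then show False
        using C(2) by simp
    qed
  qed
  ultimately show ?thesis
    unfolding transverse_def tight_incl_def by blast
qed

end

lemma cubical_action_graph_automorphism: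
  assumes "cubical_action G V E act" "h \<in> carrier G"
  shows "graph_automorphism V E (act h)"
proof -
  have "group_action G V act"
    using assms(1) by (simp add: cubical_action_def)
  then have "bij_betw (act h) V V"
    using assms(2) group_action.bij_prop0 by (fastforce simp: Bij_def)
  then show ?thesis
    using assms by (auto simp: graph_automorphism_def cubical_action_def)
qed

theorem lemma3p3:
  fixes G :: "('g, 'b) monoid_scheme"
    and V :: "'v set" and E :: "'v \<Rightarrow> 'v \<Rightarrow> bool" and act :: "'g \<Rightarrow> 'v \<Rightarrow> 'v"
  assumes "median_graph V E"
    and "group G"
    and "raag_like G V E act"
    and "h \<in> carrier G"
    and "\<exists>x \<in> V. act h x \<noteq> x"
  shows "\<forall>v \<in> V. act h v \<noteq> v"
proof (rule ccontr)
  interpret median V E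
    using assms(1) by (rule median_graph_imp_median)
  have raag: "cubical_action G V E act"
      "\<forall>P\<in>halfspaces V E. \<forall>g\<in>carrier G. \<not> transverse V P (act g ` P)"
      "\<forall>P\<in>halfspaces V E. \<forall>g\<in>carrier G. \<not> tight_incl V E P (act g ` hcompl V P)"
    using assms(3) by (simp_all add: raag_like_def)
  have aut: "graph_automorphism V E (act h)"
    using raag(1) assms(4) by (rule cubical_action_graph_automorphism)
  assume "\<not> (\<forall>v \<in> V. act h v \<noteq> v)"
  then obtain v where v: "v \<in> V" "act h v = v"
    by blast
  obtain x where x: "x \<in> V" "act h x \<noteq> x"
    using assms(5) by blast
  obtain u w where uw: "E u w" "act h u = u" "act h w \<noteq> w"
    using edge_fixed_moved[OF v x] by blast
  define A where "A = halfspace_of_edge V E w u"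
  have "A \<in> halfspaces V E"
    using edge_sym[OF uw(1)] by (auto simp: A_def halfspaces_def)
  then have "\<not> transverse V A (act h ` A)" "\<not> tight_incl V E A (act h ` hcompl V A)"
    using raag(2,3) assms(4) by blast+
  moreover have "act h ` A = halfspace_of_edge V E (act h w) u"
    using halfspace_automorphism[OF aut edge_sym[OF uw(1)]] uw(2) by (simp add: A_def)
  moreover have "act h ` hcompl V A = hcompl V (act h ` A)"
    using aut by (intro image_hcompl) (auto simp: graph_automorphism_def A_def halfspace_of_edge_def)
  moreover have "E u (act h w)"
    using aut uw edge_in_V edge_in_V' by (fastforce simp: graph_automorphism_def)
  ultimately show False
    using halfspaces_at_vertex_transverse_or_tight[OF uw(1) _ uw(3)[symmetric]] by (simp add: A_def)
qed

end
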